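(* Let $(K_n)_{n\in\omega}$ be an enumeration of the finitely presented groups (one representative of each isomorphism class), and let $G=\prod_{n\in\omega}K_n$ be their restricted direct product (the subgroup of the full direct product consisting of the elements with only finitely many nontrivial coordinates). Let $L$ be a two-generated simple group such that every homomorphism $L\to G$ is trivial, and let $H=L\times G$. Then $R_G L = L$ and $R_H L = 1$. In particular, $G$ and $H$ are not geometrically equivalent, while $G$ and $H$ satisfy the same quasiidentities.
   Context: For groups $G$ and $X$, the $G$-radical of $X$ is $R_G X=\bigcap\{\ker\varphi : \varphi: X\to G \text{ a homomorphism}\}$. For a normal subgroup $U$ of $X$, the $G$-closure $\overline{U}^G$ of $U$ in $X$ is the normal subgroup of $X$ containing $U$ with $\overline{U}^G/U = R_G(X/U)$; equivalently $\overline{U}^G=\bigcap\{\ker\varphi:\varphi:X\to G,\ U\subseteq\ker\varphi\}$. Two groups $G$ and $H$ are geometrically equivalent if for every free group $F$ of finite rank and every normal subgroup $U$ of $F$, the $G$-closure and the $H$-closure of $U$ in $F$ coincide. A quasiidentity is a formula $(w_1=1\wedge\dots\wedge w_n=1)\rightarrow w=1$ where $w_1,\dots,w_n,w$ are words in a free group of finite rank; a group satisfies it if it holds under every assignment of group elements to the variables. Two groups satisfy the same quasiidentities if every quasiidentity satisfied by one is satisfied by the other. *)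

theory Defs
  imports "HOL-Algebra.Algebra"
begin

text \<open>A letter (b, i) stands for the generator x_i if b = False and for its inverse if b = True.\<close>
type_synonym fword = "(bool \<times> nat) list"

fun inv_letter :: "bool \<times> nat \<Rightarrow> bool \<times> nat" where
  "inv_letter (b, i) = (\<not> b, i)"

fun fw_reduce :: "fword \<Rightarrow> fword" where
  "fw_reduce [] = []"
| "fw_reduce (x # xs) =
     (case fw_reduce xs of
        [] \<Rightarrow> [x]
      | y # ys \<Rightarrow> (if y = inv_letter x then ys else x # y # ys))"

definition free_group :: "nat \<Rightarrow> fword monoid" where
  "free_group k =
     \<lparr>carrier = {w. fw_reduce w = w \<and> (\<forall>l \<in> set w. snd l < k)},
      monoid.mult = (\<lambda>u v. fw_reduce (u @ v)),
      one = []\<rparr>"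

definition normal_closure :: "('a, 'm) monoid_scheme \<Rightarrow> 'a set \<Rightarrow> 'a set" where
  "normal_closure F R = \<Inter> {N. normal N F \<and> R \<subseteq> N}"

definition presented_group :: "nat \<Rightarrow> fword set \<Rightarrow> fword set monoid" where
  "presented_group k R = free_group k Mod normal_closure (free_group k) R"

definition finitely_presented :: "('a, 'm) monoid_scheme \<Rightarrow> bool" where
  "finitely_presented Y \<longleftrightarrow> group Y \<and>
     (\<exists>k R. finite R \<and> R \<subseteq> carrier (free_group k) \<and> is_iso Y (presented_group k R))"

text \<open>Not the library's simple_group, which presupposes finiteness (order G > 1).\<close>
definition simple :: "('a, 'm) monoid_scheme \<Rightarrow> bool" where
  "simple Y \<longleftrightarrow> group Y \<and> carrier Y \<noteq> {\<one>\<^bsub>Y\<^esub>} \<and>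
     (\<forall>N. normal N Y \<longrightarrow> N = carrier Y \<or> N = {\<one>\<^bsub>Y\<^esub>})"

definition two_generated :: "('a, 'm) monoid_scheme \<Rightarrow> bool" where
  "two_generated Y \<longleftrightarrow> (\<exists>a \<in> carrier Y. \<exists>b \<in> carrier Y. generate Y {a, b} = carrier Y)"

definition radical :: "('g, 'n) monoid_scheme \<Rightarrow> ('x, 'm) monoid_scheme \<Rightarrow> 'x set" where
  "radical G Y = \<Inter> {kernel Y G \<phi> | \<phi>. \<phi> \<in> hom Y G}"

definition gclosure :: "('g, 'n) monoid_scheme \<Rightarrow> ('x, 'm) monoid_scheme \<Rightarrow> 'x set \<Rightarrow> 'x set" where
  "gclosure G Y U = \<Inter> {kernel Y G \<phi> | \<phi>. \<phi> \<in> hom Y G \<and> U \<subseteq> kernel Y G \<phi>}"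

definition geom_equiv :: "('g, 'n) monoid_scheme \<Rightarrow> ('h, 'm) monoid_scheme \<Rightarrow> bool" where
  "geom_equiv G H \<longleftrightarrow>
     (\<forall>k U. normal U (free_group k) \<longrightarrow> gclosure G (free_group k) U = gclosure H (free_group k) U)"

definition word_eval :: "('x, 'm) monoid_scheme \<Rightarrow> (nat \<Rightarrow> 'x) \<Rightarrow> fword \<Rightarrow> 'x" where
  "word_eval Y a w =
     foldr (\<lambda>(b, i) r. (if b then inv\<^bsub>Y\<^esub> (a i) else a i) \<otimes>\<^bsub>Y\<^esub> r) w \<one>\<^bsub>Y\<^esub>"

definition satisfies_qi :: "('x, 'm) monoid_scheme \<Rightarrow> nat \<Rightarrow> fword list \<Rightarrow> fword \<Rightarrow> bool" where
  "satisfies_qi Y k ws w \<longleftrightarrow>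
     (\<forall>a. (\<forall>i < k. a i \<in> carrier Y) \<longrightarrow>
          (\<forall>v \<in> set ws. word_eval Y a v = \<one>\<^bsub>Y\<^esub>) \<longrightarrow> word_eval Y a w = \<one>\<^bsub>Y\<^esub>)"

definition same_quasiidentities :: "('g, 'n) monoid_scheme \<Rightarrow> ('h, 'm) monoid_scheme \<Rightarrow> bool" where
  "same_quasiidentities G H \<longleftrightarrow>
     (\<forall>k ws w. set ws \<subseteq> carrier (free_group k) \<longrightarrow> w \<in> carrier (free_group k) \<longrightarrow>
        (satisfies_qi G k ws w \<longleftrightarrow> satisfies_qi H k ws w))"

end

theory Submission
  imports Defs
begin

text \<open>
  Every homomorphism \<open>L \<rightarrow> G\<close> is trivial, so \<open>R\<^sub>G L = L\<close>, while \<open>L\<close> embeds into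
  \<open>H = L \<times> G\<close>, so \<open>R\<^sub>H L = 1\<close>. Writing \<open>L = F\<^sub>2 / U\<close>, the \<open>G\<close>-closure of \<open>U\<close> is the
  preimage of \<open>R\<^sub>G L\<close>, which is all of \<open>F\<^sub>2\<close>, whereas its \<open>H\<close>-closure is \<open>U\<close>; hence \<open>G\<close> and
  \<open>H\<close> are not geometrically equivalent.

  Quasiidentities of \<open>H\<close> hold in its subgroup \<open>G\<close>. Conversely, if \<open>ws = 1 \<longrightarrow> w = 1\<close> holds
  in \<open>G\<close>, it holds in the finitely presented group \<open>\<langle>x | ws\<rangle>\<close>, which embeds into \<open>G\<close>;
  so \<open>w\<close> lies in the normal closure of \<open>ws\<close> and the quasiidentity holds in every group,
  in particular in \<open>L\<close> and in \<open>L \<times> G\<close>.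
\<close>

section \<open>Reduced words and the free group\<close>

fun reduced :: "fword \<Rightarrow> bool" where
  "reduced [] = True"
| "reduced [x] = True"
| "reduced (x # y # ys) = (y \<noteq> inv_letter x \<and> reduced (y # ys))"

definition cancel_cons :: "bool \<times> nat \<Rightarrow> fword \<Rightarrow> fword" where
  "cancel_cons x w = (case w of [] \<Rightarrow> [x] | y # ys \<Rightarrow> (if y = inv_letter x then ys else x # y # ys))"

lemma fw_reduce_Cons: "fw_reduce (x # xs) = cancel_cons x (fw_reduce xs)"
  by (simp add: cancel_cons_def)

declare fw_reduce.simps(2)[simp del]

lemma inv_letter_inv_letter [simp]: "inv_letter (inv_letter x) = x"
  by (cases x) auto

lemma reduced_tl: "reduced (x # xs) \<Longrightarrow> reduced xs"
  by (cases xs) auto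

lemma reduced_cancel_cons: "reduced w \<Longrightarrow> reduced (cancel_cons x w)"
  by (cases w) (auto simp: cancel_cons_def dest: reduced_tl)

lemma reduced_fw_reduce: "reduced (fw_reduce w)"
  by (induction w) (auto simp: fw_reduce_Cons reduced_cancel_cons)

lemma fw_reduce_reduced: "reduced w \<Longrightarrow> fw_reduce w = w"
  by (induction w rule: reduced.induct) (auto simp: fw_reduce_Cons cancel_cons_def)

lemma fw_reduce_idem [simp]: "fw_reduce (fw_reduce w) = fw_reduce w"
  by (simp add: fw_reduce_reduced reduced_fw_reduce)

lemma fw_reduce_eq_iff: "fw_reduce w = w \<longleftrightarrow> reduced w"
  by (metis fw_reduce_reduced reduced_fw_reduce)

lemma set_fw_reduce: "set (fw_reduce w) \<subseteq> set w"
proof (induction w)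
  case (Cons x w)
  have "set (cancel_cons x u) \<subseteq> insert x (set u)" for u
    by (cases u) (auto simp: cancel_cons_def)
  then show ?case using Cons by (fastforce simp: fw_reduce_Cons)
qed simp

lemma fw_reduce_append: "fw_reduce (u @ v) = foldr cancel_cons u (fw_reduce v)"
  by (induction u) (auto simp: fw_reduce_Cons)

lemma cancel_cons_inverse: "reduced w \<Longrightarrow> cancel_cons x (cancel_cons (inv_letter x) w) = w"
  by (cases w rule: reduced.cases) (auto simp: cancel_cons_def)

lemma reduced_foldr_cancel_cons: "reduced w \<Longrightarrow> reduced (foldr cancel_cons u w)"
  by (induction u) (auto simp: reduced_cancel_cons)

lemma foldr_cancel_cons_cancel_cons:
  assumes "reduced w"
  shows "foldr cancel_cons (cancel_cons x u) w = cancel_cons x (foldr cancel_cons u w)"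
proof (cases u)
  case (Cons y ys)
  then show ?thesis
    using cancel_cons_inverse[OF reduced_foldr_cancel_cons[OF assms], of x ys]
    by (auto simp: cancel_cons_def)
qed (simp add: cancel_cons_def)

lemma foldr_cancel_cons_fw_reduce:
  "reduced w \<Longrightarrow> foldr cancel_cons (fw_reduce u) w = foldr cancel_cons u w"
  by (induction u) (auto simp: fw_reduce_Cons foldr_cancel_cons_cancel_cons)

lemma fw_reduce_assoc: "fw_reduce (fw_reduce (u @ v) @ w) = fw_reduce (u @ fw_reduce (v @ w))"
proof -
  have "fw_reduce (fw_reduce (u @ v) @ w) = foldr cancel_cons (u @ v) (fw_reduce w)"
    by (simp only: fw_reduce_append[of "fw_reduce (u @ v)"] foldr_cancel_cons_fw_reduce
        reduced_fw_reduce)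
  also have "\<dots> = fw_reduce (u @ fw_reduce (v @ w))"
    by (metis fw_reduce_append fw_reduce_idem foldr_append)
  finally show ?thesis .
qed

lemma fw_reduce_inverse_append: "fw_reduce (rev (map inv_letter w) @ w) = []"
proof (induction w)
  case (Cons x w)
  have "fw_reduce (rev (map inv_letter (x # w)) @ x # w)
      = foldr cancel_cons (rev (map inv_letter w)) (fw_reduce (inv_letter x # x # w))"
    by (simp add: fw_reduce_append)
  also have "fw_reduce (inv_letter x # x # w) = fw_reduce w"
    using cancel_cons_inverse[of _ "inv_letter x"] by (simp add: fw_reduce_Cons reduced_fw_reduce)
  finally show ?case using Cons by (simp add: fw_reduce_append)
qed simp

lemma carrier_free_group: "carrier (free_group k) = {w. reduced w \<and> (\<forall>l \<in> set w. snd l < k)}"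
  by (simp add: free_group_def fw_reduce_eq_iff)

lemma mult_free_group [simp]: "u \<otimes>\<^bsub>free_group k\<^esub> v = fw_reduce (u @ v)"
  by (simp add: free_group_def)

lemma one_free_group [simp]: "\<one>\<^bsub>free_group k\<^esub> = []"
  by (simp add: free_group_def)

lemma fw_reduce_in_free_group: "\<forall>l \<in> set w. snd l < k \<Longrightarrow> fw_reduce w \<in> carrier (free_group k)"
  using set_fw_reduce[of w] by (auto simp: carrier_free_group reduced_fw_reduce)

lemma group_free_group: "group (free_group k)"
proof (rule groupI)
  fix x assume x: "x \<in> carrier (free_group k)"
  let ?y = "fw_reduce (rev (map inv_letter x))"
  have "?y \<in> carrier (free_group k)"
    using x by (intro fw_reduce_in_free_group) (auto simp: carrier_free_group)
  moreover have "?y \<otimes>\<^bsub>free_group k\<^esub> x = \<one>\<^bsub>free_group k\<^esub>"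
    using fw_reduce_inverse_append[of x] x
    by (simp add: fw_reduce_append foldr_cancel_cons_fw_reduce reduced_fw_reduce)
  ultimately show "\<exists>y\<in>carrier (free_group k). y \<otimes>\<^bsub>free_group k\<^esub> x = \<one>\<^bsub>free_group k\<^esub>"
    by blast
qed ((fastforce simp: carrier_free_group fw_reduce_assoc fw_reduce_reduced reduced_fw_reduce
         dest!: set_fw_reduce[THEN subsetD])+)

section \<open>Evaluation of words\<close>

definition eval_letter :: "('x, 'm) monoid_scheme \<Rightarrow> (nat \<Rightarrow> 'x) \<Rightarrow> bool \<times> nat \<Rightarrow> 'x" where
  "eval_letter Y a l = (if fst l then inv\<^bsub>Y\<^esub> (a (snd l)) else a (snd l))"

lemma word_eval_Nil [simp]: "word_eval Y a [] = \<one>\<^bsub>Y\<^esub>"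
  by (simp add: word_eval_def)

lemma word_eval_Cons: "word_eval Y a (x # xs) = eval_letter Y a x \<otimes>\<^bsub>Y\<^esub> word_eval Y a xs"
  by (cases x) (simp add: word_eval_def eval_letter_def)

context group
begin

lemma eval_letter_closed: "a (snd x) \<in> carrier G \<Longrightarrow> eval_letter G a x \<in> carrier G"
  by (simp add: eval_letter_def)

lemma eval_letter_inv_letter:
  "a (snd x) \<in> carrier G \<Longrightarrow> eval_letter G a x \<otimes> eval_letter G a (inv_letter x) = \<one>"
  by (cases x) (auto simp: eval_letter_def)

lemma word_eval_closed: "\<forall>l \<in> set w. a (snd l) \<in> carrier G \<Longrightarrow> word_eval G a w \<in> carrier G"
  by (induction w) (auto simp: word_eval_Cons eval_letter_closed)

lemma word_eval_append:
  "\<forall>l \<in> set (u @ v). a (snd l) \<in> carrier G \<Longrightarrow>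
     word_eval G a (u @ v) = word_eval G a u \<otimes> word_eval G a v"
  by (induction u) (auto simp: word_eval_Cons m_assoc eval_letter_closed word_eval_closed)

lemma word_eval_cancel_cons:
  assumes "\<forall>l \<in> set (x # w). a (snd l) \<in> carrier G"
  shows "word_eval G a (cancel_cons x w) = eval_letter G a x \<otimes> word_eval G a w"
proof (cases w)
  case (Cons y ys)
  then show ?thesis
    using assms eval_letter_inv_letter[of a x]
    by (auto simp: cancel_cons_def word_eval_Cons eval_letter_closed word_eval_closed
        simp flip: m_assoc)
qed (simp add: cancel_cons_def word_eval_Cons)

lemma word_eval_fw_reduce:
  "\<forall>l \<in> set w. a (snd l) \<in> carrier G \<Longrightarrow> word_eval G a (fw_reduce w) = word_eval G a w"
proof (induction w)
  case (Cons x w)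
  then have "\<forall>l \<in> set (x # fw_reduce w). a (snd l) \<in> carrier G"
    using set_fw_reduce[of w] by auto
  then show ?case using Cons by (simp add: fw_reduce_Cons word_eval_cancel_cons word_eval_Cons)
qed simp

lemma word_eval_hom:
  assumes "\<forall>i<k. a i \<in> carrier G"
  shows "word_eval G a \<in> hom (free_group k) G"
proof (rule homI)
  fix u v assume "u \<in> carrier (free_group k)" "v \<in> carrier (free_group k)"
  then have "\<forall>l \<in> set (u @ v). a (snd l) \<in> carrier G"
    using assms by (auto simp: carrier_free_group)
  then show "word_eval G a (u \<otimes>\<^bsub>free_group k\<^esub> v) = word_eval G a u \<otimes> word_eval G a v"
    by (simp add: word_eval_fw_reduce word_eval_append)
qed (use assms in \<open>auto simp: carrier_free_group intro!: word_eval_closed\<close>)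

end

lemma generator_in_free_group: "i < k \<Longrightarrow> [(b, i)] \<in> carrier (free_group k)"
  by (simp add: carrier_free_group)

lemma inv_generator: "i < k \<Longrightarrow> inv\<^bsub>free_group k\<^esub> [(False, i)] = [(True, i)]"
  by (rule group.inv_equality[OF group_free_group])
     (auto simp: generator_in_free_group fw_reduce_Cons cancel_cons_def)

lemma word_eval_generators:
  "w \<in> carrier (free_group k) \<Longrightarrow> word_eval (free_group k) (\<lambda>i. [(False, i)]) w = w"
proof (induction w)
  case (Cons x w)
  obtain b i where x: "x = (b, i)" by (cases x)
  have "reduced (x # w)" "i < k" "w \<in> carrier (free_group k)"
    using Cons.prems x reduced_tl by (auto simp: carrier_free_group)
  moreover have "eval_letter (free_group k) (\<lambda>i. [(False, i)]) x = [x]"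
    using \<open>i < k\<close> x by (simp add: eval_letter_def inv_generator)
  ultimately show ?case
    using Cons.IH by (simp add: word_eval_Cons fw_reduce_reduced)
qed simp

lemma hom_word_eval:
  assumes "group Y" "group Z" "h \<in> hom Y Z" "\<forall>l \<in> set w. a (snd l) \<in> carrier Y"
  shows "h (word_eval Y a w) = word_eval Z (h \<circ> a) w"
proof -
  interpret group_hom Y Z h
    using assms by (simp add: group_hom_def group_hom_axioms_def)
  show ?thesis
    using assms(4)
    by (induction w) (auto simp: word_eval_Cons eval_letter_def G.eval_letter_closed G.word_eval_closed)
qed

lemma hom_free_group_eq_word_eval:
  assumes "group Y" "h \<in> hom (free_group k) Y" "w \<in> carrier (free_group k)"
  shows "h w = word_eval Y (\<lambda>i. h [(False, i)]) w"
  using hom_word_eval[OF group_free_group assms(1,2), of w "\<lambda>i. [(False, i)]"] assms(3)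
  by (auto simp: word_eval_generators carrier_free_group generator_in_free_group comp_def)

lemma word_eval_epi:
  assumes "group Y" "a ` {..<k} \<subseteq> carrier Y" "generate Y (a ` {..<k}) = carrier Y"
  shows "word_eval Y a \<in> epi (free_group k) Y"
proof -
  have hom: "word_eval Y a \<in> hom (free_group k) Y"
    using assms by (intro group.word_eval_hom) auto
  then interpret group_hom "free_group k" Y "word_eval Y a"
    using assms group_free_group by (simp add: group_hom_def group_hom_axioms_def)
  have "a i = word_eval Y a [(False, i)]" if "i < k" for i
    using assms that by (auto simp: word_eval_Cons eval_letter_def)
  then have "a ` {..<k} \<subseteq> word_eval Y a ` carrier (free_group k)"
    using generator_in_free_group by blast
  then have "carrier Y \<subseteq> word_eval Y a ` carrier (free_group k)"
    using group.generate_subgroup_incl[OF assms(1) _ img_is_subgroup] assms(3) by blast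
  then show ?thesis
    using hom by (auto simp: epi_def)
qed

lemma letter_values_in_carrier:
  "v \<in> carrier (free_group k) \<Longrightarrow> \<forall>i<k. a i \<in> A \<Longrightarrow> \<forall>l \<in> set v. a (snd l) \<in> A"
  by (auto simp: carrier_free_group)

section \<open>Normal closures and presented groups\<close>

lemma normal_closure_normal:
  assumes "group F" "R \<subseteq> carrier F"
  shows "normal_closure F R \<lhd> F"
proof -
  interpret group F by fact
  let ?A = "{N. N \<lhd> F \<and> R \<subseteq> N}"
  have "carrier F \<in> ?A" using normal_self assms by auto
  then have "subgroup (\<Inter>?A) F"
    by (intro subgroup_Inter) (auto dest: normal_imp_subgroup)
  moreover have "x \<otimes>\<^bsub>F\<^esub> h \<otimes>\<^bsub>F\<^esub> inv\<^bsub>F\<^esub> x \<in> \<Inter>?A" if "x \<in> carrier F" "h \<in> \<Inter>?A" for x h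
    using that normal_inv_iff by blast
  ultimately show ?thesis
    unfolding normal_closure_def using normal_inv_iff by blast
qed

lemma normal_closure_minimal: "N \<lhd> F \<Longrightarrow> R \<subseteq> N \<Longrightarrow> normal_closure F R \<subseteq> N"
  by (auto simp: normal_closure_def)

lemma subset_normal_closure: "R \<subseteq> normal_closure F R"
  by (auto simp: normal_closure_def)

lemma group_presented_group: "R \<subseteq> carrier (free_group k) \<Longrightarrow> group (presented_group k R)"
  unfolding presented_group_def
  by (rule normal.factorgroup_is_group[OF normal_closure_normal[OF group_free_group]])

lemma finitely_presented_presented_group:
  "finite R \<Longrightarrow> R \<subseteq> carrier (free_group k) \<Longrightarrow> finitely_presented (presented_group k R)"
  unfolding finitely_presented_def using group_presented_group iso_refl by blast

section \<open>Radicals and closures\<close>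

lemma (in group_hom) hom_factors_through_epi:
  assumes surj: "h ` carrier G = carrier H" and "group K" and psi: "\<psi> \<in> hom G K"
    and ker: "kernel G H h \<subseteq> kernel G K \<psi>"
  obtains \<theta> where "\<theta> \<in> hom H K" "\<And>x. x \<in> carrier G \<Longrightarrow> \<theta> (h x) = \<psi> x"
proof -
  let ?N = "kernel G H h"
  interpret psi: group_hom G K \<psi>
    using assms G.is_group by (simp add: group_hom_def group_hom_axioms_def)
  obtain g where g: "g \<in> hom (G Mod ?N) K" "\<And>x. x \<in> carrier G \<Longrightarrow> g (?N #> x) = \<psi> x"
    using psi.FactGroup_universal_kernel[OF normal_kernel ker] by metis
  let ?f = "\<lambda>S. the_elem (h ` S)"
  have iso: "?f \<in> iso (G Mod ?N) H"
    by (rule FactGroup_iso_set[OF surj])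
  have coset: "?N #> x \<in> carrier (G Mod ?N)" "?f (?N #> x) = h x" if "x \<in> carrier G" for x
  proof -
    show "?N #> x \<in> carrier (G Mod ?N)"
      using that by (auto simp: carrier_FactGroup)
    have "h ` (?N #> x) = {h x}"
      using that by (auto simp: kernel_def r_coset_def intro!: imageI)
    then show "?f (?N #> x) = h x" by simp
  qed
  \<comment> \<open>the map induced by \<open>\<psi>\<close> on \<open>G / ker h\<close>, transported to \<open>H\<close> by the first isomorphism theorem\<close>
  define \<theta> where "\<theta> = compose (carrier H) g (inv_into (carrier (G Mod ?N)) ?f)"
  have "\<theta> \<in> hom H K"
    unfolding \<theta>_def
    using hom_compose[OF iso_imp_homomorphism[OF group.iso_set_sym[OF
          normal.factorgroup_is_group[OF normal_kernel] iso]] g(1)] .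
  moreover have "\<theta> (h x) = \<psi> x" if x: "x \<in> carrier G" for x
  proof -
    have "inj_on ?f (carrier (G Mod ?N))"
      using iso unfolding Group.iso_iff by blast
    then have "inv_into (carrier (G Mod ?N)) ?f (?f (?N #> x)) = ?N #> x"
      using coset(1)[OF x] by (rule inv_into_f_f)
    then show ?thesis
      using x g(2) coset(2)[OF x] by (simp add: \<theta>_def compose_def)
  qed
  ultimately show thesis using that by blast
qed

lemma radical_subset_kernel: "\<theta> \<in> hom Y H \<Longrightarrow> radical H Y \<subseteq> kernel Y H \<theta>"
  unfolding radical_def by blast

lemma radical_subset_carrier:
  assumes "group H"
  shows "radical H Y \<subseteq> carrier Y"
proof -
  have "radical H Y \<subseteq> kernel Y H (\<lambda>_. \<one>\<^bsub>H\<^esub>)"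
    by (rule radical_subset_kernel[OF trivial_hom[OF assms]])
  then show ?thesis
    by (simp add: kernel_def)
qed

lemma radical_eq_carrier:
  assumes "group H" "\<And>\<phi>. \<phi> \<in> hom Y H \<Longrightarrow> \<forall>x \<in> carrier Y. \<phi> x = \<one>\<^bsub>H\<^esub>"
  shows "radical H Y = carrier Y"
proof
  show "radical H Y \<subseteq> carrier Y" by (rule radical_subset_carrier[OF assms(1)])
  show "carrier Y \<subseteq> radical H Y"
    using assms(2) by (auto simp: radical_def kernel_def)
qed

lemma radical_eq_one_if_mon:
  assumes "group Y" "group H" "\<psi> \<in> mon Y H"
  shows "radical H Y = {\<one>\<^bsub>Y\<^esub>}"
proof
  show "radical H Y \<subseteq> {\<one>\<^bsub>Y\<^esub>}"
    using assms by (auto simp: radical_def kernel_def mon_iff_hom_one)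
  show "{\<one>\<^bsub>Y\<^esub>} \<subseteq> radical H Y"
    using assms by (auto simp: radical_def kernel_def group.is_monoid hom_one)
qed

lemma gclosure_subset_kernel:
  "\<psi> \<in> hom F H \<Longrightarrow> U \<subseteq> kernel F H \<psi> \<Longrightarrow> gclosure H F U \<subseteq> kernel F H \<psi>"
  unfolding gclosure_def by blast

lemma in_gclosureI:
  "(\<And>\<psi>. \<psi> \<in> hom F H \<Longrightarrow> U \<subseteq> kernel F H \<psi> \<Longrightarrow> x \<in> kernel F H \<psi>) \<Longrightarrow> x \<in> gclosure H F U"
  unfolding gclosure_def by blast

lemma gclosure_kernel_epi:
  assumes F: "group F" and Y: "group Y" and H: "group H" and epi: "\<phi> \<in> epi F Y"
  shows "gclosure H F (kernel F Y \<phi>) = {x \<in> carrier F. \<phi> x \<in> radical H Y}"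
proof -
  interpret \<phi>: group_hom F Y \<phi>
    using assms by (simp add: group_hom_def group_hom_axioms_def epi_def)
  have "x \<in> carrier F \<and> \<phi> x \<in> radical H Y" if x: "x \<in> gclosure H F (kernel F Y \<phi>)" for x
  proof
    have "kernel F Y \<phi> \<subseteq> kernel F H (\<lambda>_. \<one>\<^bsub>H\<^esub>)"
      by (auto simp: kernel_def)
    then have "x \<in> kernel F H (\<lambda>_. \<one>\<^bsub>H\<^esub>)"
      using gclosure_subset_kernel[OF trivial_hom[OF H]] x by blast
    then show x_in: "x \<in> carrier F"
      by (simp add: kernel_def)
    have "\<phi> x \<in> kernel Y H \<theta>" if \<theta>: "\<theta> \<in> hom Y H" for \<theta>
    proof -
      let ?\<psi> = "\<theta> \<circ> \<phi>"
      have "kernel F Y \<phi> \<subseteq> kernel F H ?\<psi>"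
        using \<theta> Y H by (auto simp: kernel_def hom_one)
      then have "gclosure H F (kernel F Y \<phi>) \<subseteq> kernel F H ?\<psi>"
        by (rule gclosure_subset_kernel[OF hom_compose[OF \<phi>.homh \<theta>]])
      then have "x \<in> kernel F H ?\<psi>"
        using x by (rule subsetD)
      then show ?thesis
        using x_in by (simp add: kernel_def)
    qed
    then show "\<phi> x \<in> radical H Y"
      by (auto simp: radical_def)
  qed
  moreover have "x \<in> gclosure H F (kernel F Y \<phi>)"
    if x: "x \<in> carrier F" "\<phi> x \<in> radical H Y" for x
  proof (rule in_gclosureI)
    fix \<psi> assume \<psi>: "\<psi> \<in> hom F H" and ker: "kernel F Y \<phi> \<subseteq> kernel F H \<psi>"
    obtain \<theta> where \<theta>: "\<theta> \<in> hom Y H" "\<theta> (\<phi> x) = \<psi> x"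
      using epi x(1) by (auto simp: epi_def intro: \<phi>.hom_factors_through_epi[OF _ H \<psi> ker])
    then have "\<phi> x \<in> kernel Y H \<theta>"
      using radical_subset_kernel x(2) by blast
    then show "x \<in> kernel F H \<psi>"
      using \<theta>(2) x(1) by (simp add: kernel_def)
  qed
  ultimately show ?thesis by blast
qed

lemma radical_eq_if_geom_equiv:
  assumes "geom_equiv G H" "group G" "group H" "group Y" "\<phi> \<in> epi (free_group k) Y"
  shows "radical G Y = radical H Y"
proof -
  have "kernel (free_group k) Y \<phi> \<lhd> free_group k"
    using assms group_free_group
    by (intro group_hom.normal_kernel) (simp add: group_hom_def group_hom_axioms_def epi_def)
  then have "gclosure G (free_group k) (kernel (free_group k) Y \<phi>)
           = gclosure H (free_group k) (kernel (free_group k) Y \<phi>)"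
    using assms(1) unfolding geom_equiv_def by blast
  then have pre: "{x \<in> carrier (free_group k). \<phi> x \<in> radical G Y}
           = {x \<in> carrier (free_group k). \<phi> x \<in> radical H Y}"
    using assms(2-5) by (simp add: gclosure_kernel_epi[OF group_free_group])
  have "radical G Y = \<phi> ` {x \<in> carrier (free_group k). \<phi> x \<in> radical G Y}"
    using radical_subset_carrier[OF assms(2), of Y] assms(5) by (auto simp: epi_def)
  also have "\<dots> = radical H Y"
    using radical_subset_carrier[OF assms(3), of Y] assms(5) by (auto simp: epi_def pre)
  finally show ?thesis .
qed

lemma two_generated_radical_eq_if_geom_equiv:
  assumes "geom_equiv G H" "group G" "group H" "group Y" "two_generated Y"
  shows "radical G Y = radical H Y"
proof -
  obtain a b where ab: "a \<in> carrier Y" "b \<in> carrier Y" "generate Y {a, b} = carrier Y"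
    using assms(5) unfolding two_generated_def by blast
  define c where "c = (\<lambda>i::nat. if i = 0 then a else b)"
  have "c ` {..<2} = {a, b}"
    by (auto simp: c_def image_def lessThan_def less_2_cases_iff)
  then have "word_eval Y c \<in> epi (free_group 2) Y"
    using word_eval_epi[OF assms(4)] ab by simp
  then show ?thesis
    by (rule radical_eq_if_geom_equiv[OF assms(1-4)])
qed

section \<open>Embeddings into products\<close>

lemma fst_hom_DirProd: "fst \<in> hom (Y \<times>\<times> Z) Y"
  by (auto simp: hom_def mult_DirProd')

lemma snd_hom_DirProd: "snd \<in> hom (Y \<times>\<times> Z) Z"
  by (auto simp: hom_def mult_DirProd')

lemma inl_mon_DirProd: "group Y \<Longrightarrow> group Z \<Longrightarrow> (\<lambda>y. (y, \<one>\<^bsub>Z\<^esub>)) \<in> mon Y (Y \<times>\<times> Z)"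
  by (auto simp: mon_def hom_def inj_on_def group.is_monoid)

lemma inr_mon_DirProd: "group Y \<Longrightarrow> group Z \<Longrightarrow> (\<lambda>z. (\<one>\<^bsub>Y\<^esub>, z)) \<in> mon Z (Y \<times>\<times> Z)"
  by (auto simp: mon_def hom_def inj_on_def group.is_monoid)

lemma mon_sum_group:
  assumes "\<And>i. i \<in> I \<Longrightarrow> group (K i)" "n \<in> I"
  shows "(\<lambda>x. \<lambda>i\<in>I. if i = n then x else \<one>\<^bsub>K i\<^esub>) \<in> mon (K n) (sum_group I K)"
proof -
  have "finite {i \<in> I. (if i = n then x else \<one>\<^bsub>K i\<^esub>) \<noteq> \<one>\<^bsub>K i\<^esub>}" for x
    by (rule finite_subset[of _ "{n}"]) auto
  then show ?thesis
    using assms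
    by (auto simp: mon_def hom_def inj_on_def carrier_sum_group group.is_monoid fun_eq_iff
        intro!: restrict_ext)
qed

lemma mon_sum_group_if_iso:
  assumes "\<And>i. i \<in> I \<Longrightarrow> group (K i)" "n \<in> I" "Q \<cong> K n"
  shows "\<exists>\<psi>. \<psi> \<in> mon Q (sum_group I K)"
proof -
  obtain f where "f \<in> iso Q (K n)"
    using assms(3) unfolding is_iso_def by blast
  then have "f \<in> mon Q (K n)"
    by (simp add: iso_iff_mon_epi)
  moreover have "(\<lambda>x. \<lambda>i\<in>I. if i = n then x else \<one>\<^bsub>K i\<^esub>) \<in> mon (K n) (sum_group I K)"
    using assms(1,2) by (rule mon_sum_group)
  ultimately show ?thesis
    using mon_compose by blast
qed

section \<open>Quasiidentities\<close>

lemma satisfies_qi_if_in_normal_closure: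
  assumes "group Y" "set ws \<subseteq> carrier (free_group k)"
    and "w \<in> normal_closure (free_group k) (set ws)"
  shows "satisfies_qi Y k ws w"
  unfolding satisfies_qi_def
proof (intro allI impI)
  fix a assume a: "\<forall>i<k. a i \<in> carrier Y" and ws: "\<forall>v \<in> set ws. word_eval Y a v = \<one>\<^bsub>Y\<^esub>"
  have hom: "word_eval Y a \<in> hom (free_group k) Y"
    using group.word_eval_hom[OF assms(1) a] .
  then have "kernel (free_group k) Y (word_eval Y a) \<lhd> free_group k"
    using assms(1) group_free_group
    by (intro group_hom.normal_kernel) (simp add: group_hom_def group_hom_axioms_def)
  moreover have "set ws \<subseteq> kernel (free_group k) Y (word_eval Y a)"
    using assms(2) ws by (auto simp: kernel_def)
  ultimately have "normal_closure (free_group k) (set ws) \<subseteq> kernel (free_group k) Y (word_eval Y a)"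
    by (rule normal_closure_minimal)
  then show "word_eval Y a w = \<one>\<^bsub>Y\<^esub>"
    using assms(3) by (auto simp: kernel_def)
qed

lemma in_normal_closure_if_satisfies_qi:
  assumes Y: "group Y" and \<psi>: "\<psi> \<in> mon (presented_group k (set ws)) Y"
    and ws: "set ws \<subseteq> carrier (free_group k)" and w: "w \<in> carrier (free_group k)"
    and qi: "satisfies_qi Y k ws w"
  shows "w \<in> normal_closure (free_group k) (set ws)"
proof -
  let ?F = "free_group k"
  let ?N = "normal_closure ?F (set ws)"
  let ?P = "presented_group k (set ws)"
  have N: "?N \<lhd> ?F"
    using normal_closure_normal[OF group_free_group ws] .
  have P: "group ?P"
    using group_presented_group[OF ws] .
  have \<pi>: "(\<lambda>v. ?N #>\<^bsub>?F\<^esub> v) \<in> hom ?F ?P"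
    using normal.r_coset_hom_Mod[OF N] by (simp add: presented_group_def)
  define h where "h = \<psi> \<circ> (\<lambda>v. ?N #>\<^bsub>?F\<^esub> v)"
  have h: "h \<in> hom ?F Y"
    unfolding h_def using \<psi> by (auto simp: mon_def intro: hom_compose[OF \<pi>])
  have h_one: "h v = \<one>\<^bsub>Y\<^esub> \<longleftrightarrow> v \<in> ?N" if v: "v \<in> carrier ?F" for v
  proof -
    have "h v = \<one>\<^bsub>Y\<^esub> \<longleftrightarrow> ?N #>\<^bsub>?F\<^esub> v = \<one>\<^bsub>?P\<^esub>"
      using \<psi> P Y hom_in_carrier[OF \<pi> v] by (auto simp: h_def mon_iff_hom_one hom_one)
    also have "\<dots> \<longleftrightarrow> v \<in> ?N"
      using group.rcos_self[OF group_free_group v normal_imp_subgroup[OF N]]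
        subgroup.rcos_const[OF normal_imp_subgroup[OF N] group_free_group]
      by (auto simp: presented_group_def)
    finally show ?thesis .
  qed
  define b where "b = (\<lambda>i. h [(False, i)])"
  have eval_b: "word_eval Y b v = h v" if "v \<in> carrier ?F" for v
    unfolding b_def using hom_free_group_eq_word_eval[OF Y h that] by simp
  have "\<forall>i<k. b i \<in> carrier Y"
    unfolding b_def using h generator_in_free_group by (auto intro: hom_in_carrier)
  moreover have "\<forall>v \<in> set ws. word_eval Y b v = \<one>\<^bsub>Y\<^esub>"
  proof
    fix v assume "v \<in> set ws"
    then have "v \<in> carrier ?F" "v \<in> ?N"
      using ws subset_normal_closure[of "set ws" ?F] by auto
    then show "word_eval Y b v = \<one>\<^bsub>Y\<^esub>"
      using h_one eval_b by simp
  qed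
  ultimately have "word_eval Y b w = \<one>\<^bsub>Y\<^esub>"
    using qi by (simp add: satisfies_qi_def)
  then show ?thesis
    using h_one[OF w] eval_b[OF w] by simp
qed

lemma satisfies_qi_DirProd:
  assumes Y: "group Y" and Z: "group Z"
    and "satisfies_qi Y k ws w" "satisfies_qi Z k ws w"
    and ws: "set ws \<subseteq> carrier (free_group k)" and w: "w \<in> carrier (free_group k)"
  shows "satisfies_qi (Y \<times>\<times> Z) k ws w"
  unfolding satisfies_qi_def
proof (intro allI impI)
  fix a assume a: "\<forall>i<k. a i \<in> carrier (Y \<times>\<times> Z)"
    and ws_one: "\<forall>v \<in> set ws. word_eval (Y \<times>\<times> Z) a v = \<one>\<^bsub>Y \<times>\<times> Z\<^esub>"
  have YZ: "group (Y \<times>\<times> Z)"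
    using DirProd_group[OF Y Z] .
  have eval: "word_eval (Y \<times>\<times> Z) a v = (word_eval Y (fst \<circ> a) v, word_eval Z (snd \<circ> a) v)"
    if "v \<in> carrier (free_group k)" for v
    using hom_word_eval[OF YZ Y fst_hom_DirProd] hom_word_eval[OF YZ Z snd_hom_DirProd]
      letter_values_in_carrier[OF that a] by (simp add: prod_eq_iff)
  have "\<forall>i<k. (fst \<circ> a) i \<in> carrier Y" "\<forall>i<k. (snd \<circ> a) i \<in> carrier Z"
    using a by (auto simp: mem_Times_iff)
  moreover have "\<forall>v \<in> set ws. word_eval Y (fst \<circ> a) v = \<one>\<^bsub>Y\<^esub>"
    "\<forall>v \<in> set ws. word_eval Z (snd \<circ> a) v = \<one>\<^bsub>Z\<^esub>"
    using ws_one eval[OF subsetD[OF ws]] by auto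
  ultimately show "word_eval (Y \<times>\<times> Z) a w = \<one>\<^bsub>Y \<times>\<times> Z\<^esub>"
    using assms(3,4) eval[OF w] by (simp add: satisfies_qi_def)
qed

lemma satisfies_qi_mon:
  assumes Y: "group Y" and Z: "group Z" and \<psi>: "\<psi> \<in> mon Y Z"
    and qi: "satisfies_qi Z k ws w"
    and ws: "set ws \<subseteq> carrier (free_group k)" and w: "w \<in> carrier (free_group k)"
  shows "satisfies_qi Y k ws w"
  unfolding satisfies_qi_def
proof (intro allI impI)
  fix a assume a: "\<forall>i<k. a i \<in> carrier Y"
    and ws_one: "\<forall>v \<in> set ws. word_eval Y a v = \<one>\<^bsub>Y\<^esub>"
  have hom: "\<psi> \<in> hom Y Z"
    using \<psi> by (simp add: mon_def)
  have eval: "word_eval Z (\<psi> \<circ> a) v = \<psi> (word_eval Y a v)" if "v \<in> carrier (free_group k)" for v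
    using hom_word_eval[OF Y Z hom letter_values_in_carrier[OF that a]] by simp
  have "\<forall>i<k. (\<psi> \<circ> a) i \<in> carrier Z"
    using a hom by (auto intro: hom_in_carrier)
  moreover have "\<forall>v \<in> set ws. word_eval Z (\<psi> \<circ> a) v = \<one>\<^bsub>Z\<^esub>"
    using ws ws_one eval hom_one[OF hom Y Z] by auto
  ultimately have "\<psi> (word_eval Y a w) = \<one>\<^bsub>Z\<^esub>"
    using qi eval[OF w] by (simp add: satisfies_qi_def)
  then show "word_eval Y a w = \<one>\<^bsub>Y\<^esub>"
    using \<psi> Y Z group.word_eval_closed[OF Y letter_values_in_carrier[OF w a]]
    by (simp add: mon_iff_hom_one)
qed

lemma same_quasiidentities_DirProd:
  assumes Y: "group Y" and G: "group G"
    and presented_embeds: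
      "\<And>k R. finite R \<Longrightarrow> R \<subseteq> carrier (free_group k) \<Longrightarrow> \<exists>\<psi>. \<psi> \<in> mon (presented_group k R) G"
  shows "same_quasiidentities G (Y \<times>\<times> G)"
  unfolding same_quasiidentities_def
proof (intro allI impI iffI)
  fix k ws w
  assume ws: "set ws \<subseteq> carrier (free_group k)" and w: "w \<in> carrier (free_group k)"
  {
    assume qi: "satisfies_qi G k ws w"
    obtain \<psi> where "\<psi> \<in> mon (presented_group k (set ws)) G"
      using presented_embeds[OF finite_set ws] by blast
    then have "w \<in> normal_closure (free_group k) (set ws)"
      using in_normal_closure_if_satisfies_qi[OF G _ ws w qi] by blast
    then have "satisfies_qi Y k ws w"
      by (rule satisfies_qi_if_in_normal_closure[OF Y ws])
    then show "satisfies_qi (Y \<times>\<times> G) k ws w"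
      using satisfies_qi_DirProd[OF Y G _ qi ws w] by blast
  next
    assume "satisfies_qi (Y \<times>\<times> G) k ws w"
    then show "satisfies_qi G k ws w"
      using satisfies_qi_mon[OF G DirProd_group[OF Y G] inr_mon_DirProd[OF Y G] _ ws w] by blast
  }
qed

theorem theorem2:
  fixes K :: "nat \<Rightarrow> 'a monoid" and L :: "'b monoid"
    and G :: "(nat \<Rightarrow> 'a) monoid" and H :: "('b \<times> (nat \<Rightarrow> 'a)) monoid"
  assumes K_fp: "\<And>n. finitely_presented (K n)"
    and K_all: "\<And>Q :: fword set monoid. finitely_presented Q \<Longrightarrow> \<exists>n. is_iso Q (K n)"
    and K_distinct: "\<And>m n. is_iso (K m) (K n) \<Longrightarrow> m = n"
    and G_def: "G = sum_group UNIV K"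
    and L_simple: "simple L"
    and L_2gen: "two_generated L"
    and L_triv: "\<And>\<phi>. \<phi> \<in> hom L G \<Longrightarrow> \<forall>x \<in> carrier L. \<phi> x = \<one>\<^bsub>G\<^esub>"
    and H_def: "H = L \<times>\<times> G"
  shows "radical G L = carrier L \<and> radical H L = {\<one>\<^bsub>L\<^esub>}
         \<and> \<not> geom_equiv G H \<and> same_quasiidentities G H"
proof -
  have L: "group L" and K: "\<And>n. group (K n)"
    using L_simple K_fp by (simp_all add: simple_def finitely_presented_def)
  then have G: "group G" and H: "group H"
    by (simp_all add: G_def H_def DirProd_group)
  have radical_G: "radical G L = carrier L"
    using radical_eq_carrier[OF G L_triv] .
  moreover have radical_H: "radical H L = {\<one>\<^bsub>L\<^esub>}"
    using radical_eq_one_if_mon[OF L H] inl_mon_DirProd[OF L G] by (simp add: H_def)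
  moreover have "\<not> geom_equiv G H"
    using two_generated_radical_eq_if_geom_equiv[OF _ G H L L_2gen] radical_G radical_H L_simple
    by (auto simp: simple_def)
  moreover have "same_quasiidentities G H"
    unfolding H_def
  proof (rule same_quasiidentities_DirProd[OF L G])
    fix k and R :: "fword set"
    assume "finite R" "R \<subseteq> carrier (free_group k)"
    then obtain n where "presented_group k R \<cong> K n"
      using K_all finitely_presented_presented_group by blast
    then show "\<exists>\<psi>. \<psi> \<in> mon (presented_group k R) G"
      unfolding G_def using K by (intro mon_sum_group_if_iso) auto
  qed
  ultimately show ?thesis by blast
qed

end
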